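(* For every $n\ge0$, the localization $(\underline n\downarrow\Delta)[\mathcal I^{-1}]$, obtained from the coslice category $(\underline n\downarrow\Delta)$ by formally inverting all morphisms whose underlying map is injective, is a thin category.
   Context: $\Delta$ denotes the category whose objects are the finite totally ordered sets $\underline k=\{1,\dots,k\}$ for $k\ge 0$ (including the empty set $\underline 0$) and whose morphisms are order-preserving maps. $\mathcal I\subseteq\Delta$ is the subcategory of injective order-preserving maps. Objects of $(\underline n\downarrow\Delta)$ are order-preserving maps $\underline n\to\underline k$ and morphisms are order-preserving maps $\underline k\to\underline k'$ making the triangle commute. A category is thin if any two parallel morphisms are equal. *)

theory Defs
  imports Main
begin

text \<open>The finite ordinal k is modelled as the set {1..k} of naturals.
  An object of the coslice category (n \<down> Delta) is a pair (k, f) with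
  f an order-preserving map {1..n} \<rightarrow> {1..k}; f is made extensional
  (value 0 outside {1..n}) so that equal maps are equal functions.\<close>

type_synonym cobj = "nat \<times> (nat \<Rightarrow> nat)"

definition ord_map :: "nat \<Rightarrow> nat \<Rightarrow> (nat \<Rightarrow> nat) \<Rightarrow> bool" where
  "ord_map m k f \<longleftrightarrow> (\<forall>i\<in>{1..m}. f i \<in> {1..k}) \<and> mono_on {1..m} f
      \<and> (\<forall>i. i \<notin> {1..m} \<longrightarrow> f i = 0)"

definition is_cobj :: "nat \<Rightarrow> cobj \<Rightarrow> bool" where
  "is_cobj n a \<longleftrightarrow> ord_map n (fst a) (snd a)"

type_synonym carr = "cobj \<times> cobj \<times> (nat \<Rightarrow> nat)"

definition is_carr :: "nat \<Rightarrow> cobj \<Rightarrow> cobj \<Rightarrow> (nat \<Rightarrow> nat) \<Rightarrow> bool" where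
  "is_carr n a b g \<longleftrightarrow> is_cobj n a \<and> is_cobj n b \<and> ord_map (fst a) (fst b) g
      \<and> (\<forall>i\<in>{1..n}. g (snd a i) = snd b i)"

definition cid :: "cobj \<Rightarrow> (nat \<Rightarrow> nat)" where
  "cid a = (\<lambda>x. if x \<in> {1..fst a} then x else 0)"

text \<open>Zigzags: a step is either a morphism (forward) or a formal inverse of a
  morphism whose underlying map is injective (backward).\<close>

datatype step = Fwd carr | Bwd carr

inductive zz :: "nat \<Rightarrow> cobj \<Rightarrow> step list \<Rightarrow> cobj \<Rightarrow> bool" for n where
  nil: "is_cobj n a \<Longrightarrow> zz n a [] a"
| fwd: "is_carr n a c g \<Longrightarrow> zz n c p b \<Longrightarrow> zz n a (Fwd (a, c, g) # p) b"
| bwd: "is_carr n c a g \<Longrightarrow> inj_on g {1..fst c} \<Longrightarrow> zz n c p b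
          \<Longrightarrow> zz n a (Bwd (c, a, g) # p) b"

text \<open>The congruence defining the localization: hom-set-wise equivalence of
  zigzags a \<rightarrow> b generated by identity, composition and inverse relations,
  closed under pre- and post-composition with zigzags.\<close>

inductive zeq :: "nat \<Rightarrow> cobj \<Rightarrow> step list \<Rightarrow> step list \<Rightarrow> cobj \<Rightarrow> bool" for n where
  refl: "zz n a p b \<Longrightarrow> zeq n a p p b"
| sym: "zeq n a p q b \<Longrightarrow> zeq n a q p b"
| trans: "zeq n a p q b \<Longrightarrow> zeq n a q r b \<Longrightarrow> zeq n a p r b"
| ctx: "zz n a1 u a \<Longrightarrow> zeq n a p q b \<Longrightarrow> zz n b v b1 \<Longrightarrow> zeq n a1 (u @ p @ v) (u @ q @ v) b1"
| ident: "is_cobj n a \<Longrightarrow> zeq n a [Fwd (a, a, cid a)] [] a"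
| comp: "is_carr n a b g \<Longrightarrow> is_carr n b c h \<Longrightarrow>
           zeq n a [Fwd (a, b, g), Fwd (b, c, h)] [Fwd (a, c, h \<circ> g)] c"
| inv_l: "is_carr n a b g \<Longrightarrow> inj_on g {1..fst a} \<Longrightarrow>
           zeq n a [Fwd (a, b, g), Bwd (a, b, g)] [] a"
| inv_r: "is_carr n a b g \<Longrightarrow> inj_on g {1..fst a} \<Longrightarrow>
           zeq n b [Bwd (a, b, g), Fwd (a, b, g)] [] b"

definition localization_thin :: "nat \<Rightarrow> bool" where
  "localization_thin n \<longleftrightarrow> (\<forall>a b p q. zz n a p b \<longrightarrow> zz n a q b \<longrightarrow> zeq n a p q b)"

end

theory Submission
  imports Defs
begin

text \<open>The structure map f : {1..n} \<rightarrow> {1..k} of an object a = (k, f) factors as a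
  surjection onto its image, relabelled as {1..card (f ` {1..n})}, followed by an injective
  order-preserving inclusion. Out of a surjective object there is at most one morphism to
  any b, and there is one exactly when the kernel of its structure map is contained in that
  of b. Every zigzag from a to b forces this kernel containment, and an induction on its
  length shows that it is equivalent to the normal form a \<leftarrow> reduct a \<rightarrow> reduct b \<rightarrow> b,
  which depends only on a and b.\<close>

subsection \<open>Ranks in a finite linear order\<close>

definition rank_in :: "'a::linorder set \<Rightarrow> 'a \<Rightarrow> nat" where
  "rank_in S x = card {y \<in> S. y \<le> x}"

lemma rank_in_mono:
  assumes "finite S" "x \<le> x'"
  shows "rank_in S x \<le> rank_in S x'"
  unfolding rank_in_def using assms by (intro card_mono) auto

lemma rank_in_strict_mono_on:
  assumes "finite S"
  shows "strict_mono_on S (rank_in S)"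
proof (rule strict_mono_onI)
  fix x x' assume "x \<in> S" "x' \<in> S" "x < x'"
  then have "x' \<in> {y \<in> S. y \<le> x'} - {y \<in> S. y \<le> x}" by auto
  then have "{y \<in> S. y \<le> x} \<subset> {y \<in> S. y \<le> x'}" using \<open>x < x'\<close> by auto
  then show "rank_in S x < rank_in S x'"
    unfolding rank_in_def using assms by (intro psubset_card_mono) auto
qed

lemma rank_in_bij_betw:
  assumes "finite S"
  shows "bij_betw (rank_in S) S {1..card S}"
proof -
  have inj: "inj_on (rank_in S) S"
    using rank_in_strict_mono_on[OF assms] by (rule strict_mono_on_imp_inj_on)
  have "rank_in S ` S \<subseteq> {1..card S}"
  proof
    fix r assume "r \<in> rank_in S ` S"
    then obtain x where "x \<in> S" "r = rank_in S x" by blast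
    moreover have "{y \<in> S. y \<le> x} \<noteq> {}" "{y \<in> S. y \<le> x} \<subseteq> S" using \<open>x \<in> S\<close> by auto
    ultimately show "r \<in> {1..card S}"
      unfolding rank_in_def using assms
      by (simp add: Suc_le_eq card_gt_0_iff card_mono finite_subset)
  qed
  moreover have "card (rank_in S ` S) = card {1..card S}"
    using card_image[OF inj] by simp
  ultimately have "rank_in S ` S = {1..card S}"
    by (intro card_subset_eq) auto
  with inj show ?thesis by (simp add: bij_betw_def)
qed

lemma rank_in_image:
  assumes "strict_mono_on A g" "S \<subseteq> A" "x \<in> A"
  shows "rank_in (g ` S) (g x) = rank_in S x"
proof -
  have "{y \<in> g ` S. y \<le> g x} = g ` {y \<in> S. y \<le> x}"
    using assms by (auto simp: strict_mono_on_less_eq subset_iff)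
  moreover have "inj_on g {y \<in> S. y \<le> x}"
    using strict_mono_on_imp_inj_on[OF assms(1)] assms(2) by (auto intro: inj_on_subset)
  ultimately show ?thesis unfolding rank_in_def by (simp add: card_image)
qed

definition obj_image :: "nat \<Rightarrow> cobj \<Rightarrow> nat set" where
  "obj_image n a = snd a ` {1..n}"

definition surj_obj :: "nat \<Rightarrow> cobj \<Rightarrow> bool" where
  "surj_obj n a \<longleftrightarrow> obj_image n a = {1..fst a}"

definition ker_le :: "nat \<Rightarrow> cobj \<Rightarrow> cobj \<Rightarrow> bool" where
  "ker_le n a b \<longleftrightarrow> (\<forall>i\<in>{1..n}. \<forall>j\<in>{1..n}. snd a i = snd a j \<longrightarrow> snd b i = snd b j)"

lemma finite_obj_image [simp]: "finite (obj_image n a)"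
  by (simp add: obj_image_def)

lemma obj_image_subset: "is_cobj n a \<Longrightarrow> obj_image n a \<subseteq> {1..fst a}"
  unfolding is_cobj_def ord_map_def obj_image_def by auto

lemma ord_mapD: "ord_map m k f \<Longrightarrow> i \<in> {1..m} \<Longrightarrow> j \<in> {1..m} \<Longrightarrow> i \<le> j \<Longrightarrow> f i \<le> f j"
  unfolding ord_map_def by (meson mono_onD)

lemma carr_comp: "is_carr n a b g \<Longrightarrow> is_carr n b c h \<Longrightarrow> is_carr n a c (h \<circ> g)"
  unfolding is_carr_def ord_map_def by (auto simp: mono_on_def)

lemma carr_cid: "is_cobj n a \<Longrightarrow> is_carr n a a (cid a)"
  unfolding is_carr_def ord_map_def cid_def is_cobj_def by (auto simp: mono_on_def)

lemma carr_eq_if_surj_obj: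
  assumes "surj_obj n r" "is_carr n r b g" "is_carr n r b h"
  shows "g = h"
proof
  fix y show "g y = h y"
  proof (cases "y \<in> {1..fst r}")
    case True
    then obtain i where "i \<in> {1..n}" "y = snd r i"
      using assms(1) unfolding surj_obj_def obj_image_def by blast
    then show ?thesis using assms(2,3) unfolding is_carr_def by simp
  next
    case False
    then show ?thesis using assms(2,3) unfolding is_carr_def ord_map_def by simp
  qed
qed

definition factor_hom :: "nat \<Rightarrow> cobj \<Rightarrow> cobj \<Rightarrow> nat \<Rightarrow> nat" where
  "factor_hom n r b y = (if y \<in> {1..fst r} then snd b (SOME i. i \<in> {1..n} \<and> snd r i = y) else 0)"

lemma carr_factor_hom:
  assumes r: "is_cobj n r" "surj_obj n r" and b: "is_cobj n b" and ker: "ker_le n r b"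
  shows "is_carr n r b (factor_hom n r b)"
proof -
  define pre where "pre y = (SOME i. i \<in> {1..n} \<and> snd r i = y)" for y
  have pre: "pre y \<in> {1..n} \<and> snd r (pre y) = y" if "y \<in> {1..fst r}" for y
  proof -
    have "y \<in> obj_image n r" using that r(2) by (simp add: surj_obj_def)
    then obtain i where "i \<in> {1..n}" "snd r i = y" unfolding obj_image_def by blast
    then show ?thesis
      unfolding pre_def using someI[of "\<lambda>i. i \<in> {1..n} \<and> snd r i = y"] by blast
  qed
  have f: "factor_hom n r b y = (if y \<in> {1..fst r} then snd b (pre y) else 0)" for y
    by (simp add: factor_hom_def pre_def)
  have ker_pre: "snd b (pre (snd r i)) = snd b i" if "i \<in> {1..n}" for i
  proof -
    have "snd r i \<in> obj_image n r" using that by (simp add: obj_image_def)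
    then have "snd r i \<in> {1..fst r}" using r(2) by (simp add: surj_obj_def)
    from pre[OF this] ker that show ?thesis unfolding ker_le_def by blast
  qed
  have mono: "mono_on {1..fst r} (factor_hom n r b)"
  proof (rule mono_onI)
    fix y y' assume y: "y \<in> {1..fst r}" "y' \<in> {1..fst r}" "y \<le> y'"
    show "factor_hom n r b y \<le> factor_hom n r b y'"
    proof (cases "pre y \<le> pre y'")
      case True
      then show ?thesis
        using f y pre b unfolding is_cobj_def by (simp add: ord_mapD)
    next
      case False
      then have "y' \<le> y"
        using pre[OF y(1)] pre[OF y(2)] r(1) ord_mapD[of n "fst r" "snd r" "pre y'" "pre y"]
        unfolding is_cobj_def by simp
      then show ?thesis using y(3) by simp
    qed
  qed
  have "factor_hom n r b y \<in> {1..fst b}" if "y \<in> {1..fst r}" for y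
    using f pre[OF that] that b unfolding is_cobj_def ord_map_def by simp
  moreover have "factor_hom n r b y = 0" if "y \<notin> {1..fst r}" for y
    using that unfolding factor_hom_def by auto
  ultimately have "ord_map (fst r) (fst b) (factor_hom n r b)"
    using mono unfolding ord_map_def by blast
  moreover have "factor_hom n r b (snd r i) = snd b i" if "i \<in> {1..n}" for i
    using f ker_pre that r(1) unfolding is_cobj_def ord_map_def by simp
  ultimately show ?thesis using r(1) b unfolding is_carr_def by blast
qed

text \<open>reduct n a and reduct_incl n a are the two halves of the image factorization of
  the structure map of a.\<close>

definition reduct :: "nat \<Rightarrow> cobj \<Rightarrow> cobj" where
  "reduct n a = (card (obj_image n a),
     \<lambda>i. if i \<in> {1..n} then rank_in (obj_image n a) (snd a i) else 0)"

definition reduct_incl :: "nat \<Rightarrow> cobj \<Rightarrow> nat \<Rightarrow> nat" where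
  "reduct_incl n a y = (if y \<in> {1..card (obj_image n a)}
     then inv_into (obj_image n a) (rank_in (obj_image n a)) y else 0)"

lemma fst_reduct [simp]: "fst (reduct n a) = card (obj_image n a)"
  by (simp add: reduct_def)

lemma snd_reduct: "i \<in> {1..n} \<Longrightarrow> snd (reduct n a) i = rank_in (obj_image n a) (snd a i)"
  by (simp add: reduct_def)

lemma obj_image_reduct: "obj_image n (reduct n a) = {1..card (obj_image n a)}"
proof -
  define S where "S = obj_image n a"
  have "obj_image n (reduct n a) = rank_in S ` snd a ` {1..n}"
    unfolding obj_image_def[of n "reduct n a"] image_image S_def
    by (rule image_cong) (simp_all add: snd_reduct)
  also have "\<dots> = {1..card S}"
    using rank_in_bij_betw[of S] unfolding S_def obj_image_def bij_betw_def by simp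
  finally show ?thesis by (simp add: S_def)
qed

lemma surj_obj_reduct: "surj_obj n (reduct n a)"
  by (simp add: surj_obj_def obj_image_reduct)

lemma snd_reduct_eq_iff:
  assumes "i \<in> {1..n}" "j \<in> {1..n}"
  shows "snd (reduct n a) i = snd (reduct n a) j \<longleftrightarrow> snd a i = snd a j"
  using assms strict_mono_on_eq[OF rank_in_strict_mono_on[of "obj_image n a"]]
  by (simp add: snd_reduct obj_image_def)

lemma ker_le_reduct_iff: "ker_le n (reduct n a) (reduct n b) \<longleftrightarrow> ker_le n a b"
  by (simp add: ker_le_def snd_reduct_eq_iff)

lemma cobj_reduct:
  assumes "is_cobj n a"
  shows "is_cobj n (reduct n a)"
proof -
  have "mono_on {1..n} (snd (reduct n a))"
    using assms unfolding is_cobj_def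
    by (intro mono_onI) (simp add: snd_reduct ord_mapD rank_in_mono)
  moreover have "snd (reduct n a) i \<in> {1..card (obj_image n a)}" if "i \<in> {1..n}" for i
    using that obj_image_reduct[of n a] unfolding obj_image_def by blast
  ultimately show ?thesis unfolding is_cobj_def ord_map_def by (simp add: reduct_def)
qed

lemma bij_betw_reduct_incl:
  "bij_betw (reduct_incl n a) {1..card (obj_image n a)} (obj_image n a)"
proof -
  have "bij_betw (inv_into (obj_image n a) (rank_in (obj_image n a)))
      {1..card (obj_image n a)} (obj_image n a)"
    by (rule bij_betw_inv_into[OF rank_in_bij_betw[OF finite_obj_image]])
  then show ?thesis
    by (rule bij_betw_cong[THEN iffD1, rotated]) (simp add: reduct_incl_def)
qed

lemma rank_in_reduct_incl:
  "y \<in> {1..card (obj_image n a)} \<Longrightarrow> rank_in (obj_image n a) (reduct_incl n a y) = y"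
  unfolding reduct_incl_def
  by (simp add: bij_betw_inv_into_right[OF rank_in_bij_betw[OF finite_obj_image]])

lemma carr_reduct_incl:
  assumes "is_cobj n a"
  shows "is_carr n (reduct n a) a (reduct_incl n a)"
proof -
  let ?S = "obj_image n a" and ?T = "{1..card (obj_image n a)}"
  have "mono_on ?T (reduct_incl n a)"
  proof (rule mono_onI)
    fix y y' assume y: "y \<in> ?T" "y' \<in> ?T" "y \<le> y'"
    have "reduct_incl n a y \<in> ?S" "reduct_incl n a y' \<in> ?S"
      using bij_betw_apply[OF bij_betw_reduct_incl] y(1,2) by blast+
    with y show "reduct_incl n a y \<le> reduct_incl n a y'"
      using strict_mono_on_less_eq[OF rank_in_strict_mono_on[OF finite_obj_image]]
      by (metis rank_in_reduct_incl)
  qed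
  moreover have "reduct_incl n a y \<in> {1..fst a}" if "y \<in> ?T" for y
    using bij_betw_apply[OF bij_betw_reduct_incl that] obj_image_subset[OF assms] by blast
  moreover have "reduct_incl n a (snd (reduct n a) i) = snd a i" if "i \<in> {1..n}" for i
  proof -
    have "snd a i \<in> ?S" using that by (simp add: obj_image_def)
    then show ?thesis
      using that bij_betw_inv_into_left[OF rank_in_bij_betw[OF finite_obj_image]]
        bij_betw_apply[OF rank_in_bij_betw[OF finite_obj_image]]
      by (simp add: snd_reduct reduct_incl_def)
  qed
  moreover have "reduct_incl n a y = 0" if "y \<notin> ?T" for y
    using that unfolding reduct_incl_def by auto
  ultimately show ?thesis
    using assms cobj_reduct[OF assms] unfolding is_carr_def ord_map_def by simp
qed

lemma inj_reduct_incl: "inj_on (reduct_incl n a) {1..fst (reduct n a)}"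
  using bij_betw_imp_inj_on[OF bij_betw_reduct_incl] by simp

lemma reduct_eq_if_inj:
  assumes g: "is_carr n c a g" "inj_on g {1..fst c}"
  shows "reduct n c = reduct n a"
proof -
  have c: "is_cobj n c" using g(1) unfolding is_carr_def by simp
  have strict: "strict_mono_on {1..fst c} g"
    using g unfolding is_carr_def ord_map_def by (simp add: mono_imp_strict_mono)
  have img: "obj_image n a = g ` obj_image n c"
    using g(1) unfolding is_carr_def obj_image_def by (auto simp: image_image)
  have sub: "obj_image n c \<subseteq> {1..fst c}" by (rule obj_image_subset[OF c])
  have "card (obj_image n a) = card (obj_image n c)"
    unfolding img using g(2) sub by (auto intro: card_image inj_on_subset)
  moreover have "snd (reduct n c) i = snd (reduct n a) i" for i
  proof (cases "i \<in> {1..n}")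
    case True
    then have "snd c i \<in> {1..fst c}" "snd a i = g (snd c i)"
      using sub g(1) unfolding is_carr_def obj_image_def by (auto simp: image_subset_iff)
    with True show ?thesis using rank_in_image[OF strict sub] img by (simp add: snd_reduct)
  qed (auto simp: reduct_def)
  ultimately show ?thesis by (simp add: prod_eq_iff fun_eq_iff)
qed

lemma ker_le_refl: "ker_le n a a"
  by (simp add: ker_le_def)

lemma ker_le_trans: "ker_le n a b \<Longrightarrow> ker_le n b c \<Longrightarrow> ker_le n a c"
  unfolding ker_le_def by blast

lemma ker_le_if_carr: "is_carr n a b g \<Longrightarrow> ker_le n a b"
  unfolding ker_le_def is_carr_def by metis

lemma ker_le_if_inj_carr:
  assumes g: "is_carr n c a g" "inj_on g {1..fst c}"
  shows "ker_le n a c"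
  unfolding ker_le_def
proof (intro ballI impI)
  fix i j assume ij: "i \<in> {1..n}" "j \<in> {1..n}" "snd a i = snd a j"
  then have "g (snd c i) = g (snd c j)" using g(1) unfolding is_carr_def by metis
  moreover have "snd c i \<in> {1..fst c}" "snd c j \<in> {1..fst c}"
    using g(1) ij(1,2) unfolding is_carr_def is_cobj_def ord_map_def by auto
  ultimately show "snd c i = snd c j" using g(2) by (simp add: inj_on_eq_iff)
qed

lemma zz_ker_le: "zz n a p b \<Longrightarrow> ker_le n a b"
proof (induction rule: zz.induct)
  case (bwd c a g p b)
  then show ?case by (blast intro: ker_le_trans ker_le_if_inj_carr)
qed (auto intro: ker_le_refl ker_le_trans ker_le_if_carr)

lemma zz_Nil [simp]: "zz n a [] b \<longleftrightarrow> is_cobj n a \<and> b = a"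
  by (auto elim: zz.cases intro: zz.intros)

lemma zz_Fwd [simp]: "zz n a (Fwd (x, c, g) # p) b \<longleftrightarrow> x = a \<and> is_carr n a c g \<and> zz n c p b"
  by (auto elim: zz.cases intro: zz.intros)

lemma zz_Bwd [simp]:
  "zz n a (Bwd (c, x, g) # p) b \<longleftrightarrow> x = a \<and> is_carr n c a g \<and> inj_on g {1..fst c} \<and> zz n c p b"
  by (auto elim: zz.cases intro: zz.intros)

lemma zz_is_cobj: "zz n a p b \<Longrightarrow> is_cobj n a \<and> is_cobj n b"
  by (induction rule: zz.induct) (auto simp: is_carr_def)

declare zeq.trans [trans]

lemma zeq_in_context:
  "zeq n x p q y \<Longrightarrow> zz n a u x \<Longrightarrow> zz n y v b \<Longrightarrow> P = u @ p @ v \<Longrightarrow> Q = u @ q @ v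
    \<Longrightarrow> zeq n a P Q b"
  using zeq.ctx by blast

lemma zeq_comp_square:
  assumes "is_carr n x a u" "is_carr n a c g" "is_carr n x y h" "is_carr n y c v"
    and "g \<circ> u = v \<circ> h"
  shows "zeq n x [Fwd (x, a, u), Fwd (a, c, g)] [Fwd (x, y, h), Fwd (y, c, v)] c"
  using zeq.trans[OF zeq.comp[OF assms(1,2), unfolded assms(5)]
      zeq.sym[OF zeq.comp[OF assms(3,4)]]] .

lemma zeq_Fwd_Bwd_swap:
  assumes g: "is_carr n a c g" and v: "is_carr n y c v" "inj_on v {1..fst y}"
    and u: "is_carr n x a u" "inj_on u {1..fst x}" and h: "is_carr n x y h"
    and square: "g \<circ> u = v \<circ> h"
  shows "zeq n a [Fwd (a, c, g), Bwd (y, c, v)] [Bwd (x, a, u), Fwd (x, y, h)] y"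
proof -
  have objs: "is_cobj n a" "is_cobj n c" "is_cobj n x" "is_cobj n y"
    using g v u by (simp_all add: is_carr_def)
  have "zeq n a [Fwd (a, c, g), Bwd (y, c, v)]
      [Bwd (x, a, u), Fwd (x, a, u), Fwd (a, c, g), Bwd (y, c, v)] y"
    by (rule zeq_in_context[OF zeq.sym[OF zeq.inv_r[OF u]], where u = "[]"])
      (use objs g v in simp_all)
  also have "zeq n a [Bwd (x, a, u), Fwd (x, a, u), Fwd (a, c, g), Bwd (y, c, v)]
      [Bwd (x, a, u), Fwd (x, y, h), Fwd (y, c, v), Bwd (y, c, v)] y"
    by (rule zeq_in_context[OF zeq_comp_square[OF u(1) g h v(1) square],
          where u = "[Bwd (x, a, u)]"])
      (use u v objs in simp_all)
  also have "zeq n a [Bwd (x, a, u), Fwd (x, y, h), Fwd (y, c, v), Bwd (y, c, v)]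
      [Bwd (x, a, u), Fwd (x, y, h)] y"
    by (rule zeq_in_context[OF zeq.inv_l[OF v], where u = "[Bwd (x, a, u), Fwd (x, y, h)]"])
      (use u h objs in simp_all)
  finally show ?thesis .
qed

lemma zeq_Bwd_Bwd:
  assumes g: "is_carr n c a g" "inj_on g {1..fst c}" and u: "is_carr n r c u" "inj_on u {1..fst r}"
  shows "zeq n a [Bwd (c, a, g), Bwd (r, c, u)] [Bwd (r, a, g \<circ> u)] r"
proof -
  have gu: "is_carr n r a (g \<circ> u)" using carr_comp[OF u(1) g(1)] .
  have "u ` {1..fst r} \<subseteq> {1..fst c}" using u(1) unfolding is_carr_def ord_map_def by auto
  then have inj: "inj_on (g \<circ> u) {1..fst r}"
    using g(2) u(2) by (simp add: comp_inj_on inj_on_subset)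
  have objs: "is_cobj n a" "is_cobj n c" "is_cobj n r"
    using g u by (simp_all add: is_carr_def)
  have "zeq n a [Bwd (c, a, g), Bwd (r, c, u)]
      [Bwd (c, a, g), Bwd (r, c, u), Fwd (r, a, g \<circ> u), Bwd (r, a, g \<circ> u)] r"
    by (rule zeq_in_context[OF zeq.sym[OF zeq.inv_l[OF gu inj]],
          where u = "[Bwd (c, a, g), Bwd (r, c, u)]"])
      (use g u objs in simp_all)
  also have "zeq n a [Bwd (c, a, g), Bwd (r, c, u), Fwd (r, a, g \<circ> u), Bwd (r, a, g \<circ> u)]
      [Bwd (c, a, g), Bwd (r, c, u), Fwd (r, c, u), Fwd (c, a, g), Bwd (r, a, g \<circ> u)] r"
    by (rule zeq_in_context[OF zeq.sym[OF zeq.comp[OF u(1) g(1)]],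
          where u = "[Bwd (c, a, g), Bwd (r, c, u)]"])
      (use g u gu inj objs in simp_all)
  also have "zeq n a [Bwd (c, a, g), Bwd (r, c, u), Fwd (r, c, u), Fwd (c, a, g), Bwd (r, a, g \<circ> u)]
      [Bwd (c, a, g), Fwd (c, a, g), Bwd (r, a, g \<circ> u)] r"
    by (rule zeq_in_context[OF zeq.inv_r[OF u], where u = "[Bwd (c, a, g)]"])
      (use g gu inj objs in simp_all)
  also have "zeq n a [Bwd (c, a, g), Fwd (c, a, g), Bwd (r, a, g \<circ> u)] [Bwd (r, a, g \<circ> u)] r"
    by (rule zeq_in_context[OF zeq.inv_r[OF g], where u = "[]"])
      (use gu inj objs in simp_all)
  finally show ?thesis .
qed

subsection \<open>Normal forms of zigzags\<close>

definition normal_zigzag :: "nat \<Rightarrow> cobj \<Rightarrow> cobj \<Rightarrow> step list" where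
  "normal_zigzag n a b =
     [Bwd (reduct n a, a, reduct_incl n a),
      Fwd (reduct n a, reduct n b, factor_hom n (reduct n a) (reduct n b)),
      Fwd (reduct n b, b, reduct_incl n b)]"

lemma carr_factor_hom_reduct:
  assumes "is_cobj n a" "is_cobj n b" "ker_le n a b"
  shows "is_carr n (reduct n a) (reduct n b) (factor_hom n (reduct n a) (reduct n b))"
  using assms by (simp add: carr_factor_hom cobj_reduct surj_obj_reduct ker_le_reduct_iff)

lemma zeq_normal_zigzag_Nil:
  assumes a: "is_cobj n a"
  shows "zeq n a [] (normal_zigzag n a a) a"
proof -
  let ?r = "reduct n a" and ?i = "reduct_incl n a"
  have i: "is_carr n ?r a ?i" "inj_on ?i {1..fst ?r}"
    using carr_reduct_incl[OF a] inj_reduct_incl by blast+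
  have "factor_hom n ?r ?r = cid ?r"
    using carr_eq_if_surj_obj[OF surj_obj_reduct carr_factor_hom_reduct[OF a a ker_le_refl]
        carr_cid[OF cobj_reduct[OF a]]] .
  then have "zeq n a (normal_zigzag n a a) [Bwd (?r, a, ?i), Fwd (?r, a, ?i)] a"
    unfolding normal_zigzag_def
    by (intro zeq_in_context[OF zeq.ident[OF cobj_reduct[OF a]], where u = "[Bwd (?r, a, ?i)]"])
      (use i a cobj_reduct[OF a] in simp_all)
  also have "zeq n a [Bwd (?r, a, ?i), Fwd (?r, a, ?i)] [] a"
    using zeq.inv_r[OF i] .
  finally show ?thesis by (rule zeq.sym)
qed

lemma zeq_normal_zigzag_Fwd:
  assumes g: "is_carr n a c g" and b: "is_cobj n b" and ker: "ker_le n c b"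
  shows "zeq n a (Fwd (a, c, g) # normal_zigzag n c b) (normal_zigzag n a b) b"
proof -
  let ?ra = "reduct n a" and ?rc = "reduct n c" and ?rb = "reduct n b"
  let ?ia = "reduct_incl n a" and ?ic = "reduct_incl n c" and ?ib = "reduct_incl n b"
  let ?hac = "factor_hom n ?ra ?rc" and ?hcb = "factor_hom n ?rc ?rb"
    and ?hab = "factor_hom n ?ra ?rb"
  have a: "is_cobj n a" and c: "is_cobj n c" using g by (simp_all add: is_carr_def)
  have ker_ac: "ker_le n a c" using ker_le_if_carr[OF g] .
  have ia: "is_carr n ?ra a ?ia" "inj_on ?ia {1..fst ?ra}"
    using carr_reduct_incl[OF a] inj_reduct_incl by blast+
  have ic: "is_carr n ?rc c ?ic" "inj_on ?ic {1..fst ?rc}"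
    using carr_reduct_incl[OF c] inj_reduct_incl by blast+
  have ib: "is_carr n ?rb b ?ib" using carr_reduct_incl[OF b] .
  have hac: "is_carr n ?ra ?rc ?hac" using carr_factor_hom_reduct[OF a c ker_ac] .
  have hcb: "is_carr n ?rc ?rb ?hcb" using carr_factor_hom_reduct[OF c b ker] .
  have square: "g \<circ> ?ia = ?ic \<circ> ?hac"
    using carr_eq_if_surj_obj[OF surj_obj_reduct carr_comp[OF ia(1) g] carr_comp[OF hac ic(1)]] .
  have hab: "?hab = ?hcb \<circ> ?hac"
    using carr_eq_if_surj_obj[OF surj_obj_reduct
        carr_factor_hom_reduct[OF a b ker_le_trans[OF ker_ac ker]] carr_comp[OF hac hcb]] .
  have "zeq n a (Fwd (a, c, g) # normal_zigzag n c b)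
      [Bwd (?ra, a, ?ia), Fwd (?ra, ?rc, ?hac), Fwd (?rc, ?rb, ?hcb), Fwd (?rb, b, ?ib)] b"
    unfolding normal_zigzag_def
    by (rule zeq_in_context[OF zeq_Fwd_Bwd_swap[OF g ic ia hac square], where u = "[]"])
      (use a b hcb ib in simp_all)
  also have "zeq n a
      [Bwd (?ra, a, ?ia), Fwd (?ra, ?rc, ?hac), Fwd (?rc, ?rb, ?hcb), Fwd (?rb, b, ?ib)]
      (normal_zigzag n a b) b"
    unfolding normal_zigzag_def hab
    by (rule zeq_in_context[OF zeq.comp[OF hac hcb], where u = "[Bwd (?ra, a, ?ia)]"])
      (use a b ia ib cobj_reduct[OF a] in simp_all)
  finally show ?thesis .
qed

lemma zeq_normal_zigzag_Bwd:
  assumes g: "is_carr n c a g" "inj_on g {1..fst c}" and b: "is_cobj n b" and ker: "ker_le n c b"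
  shows "zeq n a (Bwd (c, a, g) # normal_zigzag n c b) (normal_zigzag n a b) b"
proof -
  let ?r = "reduct n a" and ?rb = "reduct n b"
  let ?ia = "reduct_incl n a" and ?ic = "reduct_incl n c"
  have a: "is_cobj n a" and c: "is_cobj n c" using g by (simp_all add: is_carr_def)
  have r: "reduct n c = ?r" using reduct_eq_if_inj[OF g] .
  have ia: "is_carr n ?r a ?ia" using carr_reduct_incl[OF a] .
  have ic: "is_carr n ?r c ?ic" "inj_on ?ic {1..fst ?r}"
    using carr_reduct_incl[OF c] inj_reduct_incl[of n c] by (simp_all add: r)
  have comp: "g \<circ> ?ic = ?ia"
    using carr_eq_if_surj_obj[OF surj_obj_reduct carr_comp[OF ic(1) g(1)] ia] .
  have ker_ab: "ker_le n a b" using ker_le_trans[OF ker_le_if_inj_carr[OF g] ker] .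
  show ?thesis
    unfolding normal_zigzag_def r
    by (rule zeq_in_context[OF zeq_Bwd_Bwd[OF g ic, unfolded comp], where u = "[]"])
      (use a b carr_factor_hom_reduct[OF a b ker_ab] carr_reduct_incl[OF b] in simp_all)
qed

lemma zeq_normal_zigzag: "zz n a p b \<Longrightarrow> zeq n a p (normal_zigzag n a b) b"
proof (induction rule: zz.induct)
  case (nil a)
  then show ?case by (rule zeq_normal_zigzag_Nil)
next
  case (fwd a c g p b)
  have "zeq n a (Fwd (a, c, g) # p) (Fwd (a, c, g) # normal_zigzag n c b) b"
    by (rule zeq_in_context[OF fwd.IH, where u = "[Fwd (a, c, g)]"])
      (use fwd.hyps zz_is_cobj in auto)
  also have "zeq n a (Fwd (a, c, g) # normal_zigzag n c b) (normal_zigzag n a b) b"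
    using zeq_normal_zigzag_Fwd fwd.hyps zz_is_cobj zz_ker_le by blast
  finally show ?case .
next
  case (bwd c a g p b)
  have "zeq n a (Bwd (c, a, g) # p) (Bwd (c, a, g) # normal_zigzag n c b) b"
    by (rule zeq_in_context[OF bwd.IH, where u = "[Bwd (c, a, g)]"])
      (use bwd.hyps zz_is_cobj in auto)
  also have "zeq n a (Bwd (c, a, g) # normal_zigzag n c b) (normal_zigzag n a b) b"
    using zeq_normal_zigzag_Bwd bwd.hyps zz_is_cobj zz_ker_le by blast
  finally show ?case .
qed

theorem mainTheorem9:
  fixes n :: nat
  shows "localization_thin n"
  unfolding localization_thin_def
  using zeq.trans[OF zeq_normal_zigzag zeq.sym[OF zeq_normal_zigzag]] by blast

end
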